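(* Let $\mathcal H$ be an obstruction design of type $\lambda\vdash_n d$. Then $f_{\mathcal H}(w)=0$ for every tensor $w\in\bigotimes^3\mathbb C^n$ whose border rank satisfies $\underline R(w)<\chi'(\mathcal H)$.
   Context: Notation: $[d]=\{1,\dots,d\}$. A partition $\lambda$ is a finite nonincreasing sequence of natural numbers; $|\lambda|=\sum_i\lambda_i$, $\ell(\lambda)$ is the number of nonzero parts, and $\lambda^t$ is the transposed partition. For a triple $\lambda=(\lambda^{(1)},\lambda^{(2)},\lambda^{(3)})$ of partitions, $\lambda\vdash_n d$ means $|\lambda^{(k)}|=d$ and $\ell(\lambda^{(k)})\le n$ for $k=1,2,3$. An obstruction design is a finite subset $\mathcal H\subseteq[\ell_1]\times[\ell_2]\times[\ell_3]$. For $k\in\{1,2,3\}$ the $k$-slices of $\mathcal H$ are the nonempty sets $\{x\in\mathcal H:x_k=i\}$, $i\in[\ell_k]$; they form a set partition $E^{(k)}$ of $\mathcal H$. If $\mu^{(k)}$ is the partition obtained by sorting the slice sizes nonincreasingly, the type of $\mathcal H$ is $(\lambda^{(1)},\lambda^{(2)},\lambda^{(3)})$ with $\lambda^{(k)}=(\mu^{(k)})^t$. Definition of $f_{\mathcal H}$: for a finite totally ordered set $S$, a map $J:S\to\mathbb C^n$ and $e\subseteq S$ with $|e|\le n$, $\det J|_e$ is the determinant of the $|e|\times|e|$ matrix whose columns are the vectors $J(s)$, $s\in e$, in increasing order, truncated to their first $|e|$ coordinates. For an obstruction design $\mathcal H$ of type $\lambda\vdash_n d$ with a fixed total order, and a triple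 labeling $J=(J^{(1)},J^{(2)},J^{(3)}):\mathcal H\to(\mathbb C^n)^3$, set $\mathrm{eval}_{\mathcal H}(J)=\prod_{k=1}^3\prod_{e\in E^{(k)}}\det J^{(k)}|_e$. For $w=\sum_{i=1}^r u^{(1)}_i\otimes u^{(2)}_i\otimes u^{(3)}_i\in\bigotimes^3\mathbb C^n$ define $f_{\mathcal H}(w)=\sum_{I:\mathcal H\to[r]}\mathrm{eval}_{\mathcal H}(J_I)$ where $J_I^{(k)}(s)=u^{(k)}_{I(s)}$; this is a well-defined homogeneous polynomial of degree $d$ on $\bigotimes^3\mathbb C^n$. The rank $R(w)$ of $w\in\bigotimes^3\mathbb C^n$ is the least $r$ such that $w$ is a sum of $r$ tensors $u\otimes v\otimes x$; the border rank $\underline R(w)$ is the least $r$ such that $w$ is a limit of tensors of rank at most $r$. A proper coloring of $\mathcal H$ with $c$ colors is a map $\sigma:\mathcal H\to[c]$ that is injective on every slice (of each of the three directions); the chromatic index $\chi'(\mathcal H)$ is the least $c$ admitting a proper coloring. *)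

theory Defs
  imports Complex_Main "HOL-Library.Multiset" "Jordan_Normal_Form.Determinant"
begin

text \<open>Vectors in C^n are functions nat => complex (coordinates 0..n-1 are
the relevant ones); tensors in C^n (x) C^n (x) C^n are functions nat => nat => nat => complex,
only entries with all indices < n being relevant. A total order on the design H is given by a map rk injective on H
(s < t iff rk s < rk t).\<close>

type_synonym point = "nat \<times> nat \<times> nat"
type_synonym cvec = "nat \<Rightarrow> complex"
type_synonym tensor3 = "nat \<Rightarrow> nat \<Rightarrow> nat \<Rightarrow> complex"

definition part_size :: "nat list \<Rightarrow> nat" where
  "part_size la = sum_list la"

definition part_length :: "nat list \<Rightarrow> nat" where
  "part_length la = length (filter (\<lambda>x. x \<noteq> 0) la)"

definition part_transpose :: "nat list \<Rightarrow> nat list" where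
  "part_transpose la = map (\<lambda>j. length (filter (\<lambda>x. j \<le> x) la)) [1..<Suc (Max (set (0 # la)))]"

definition vdash_n :: "nat \<Rightarrow> nat \<Rightarrow> nat list \<times> nat list \<times> nat list \<Rightarrow> bool" where
  "vdash_n n d la \<longleftrightarrow>
     (\<forall>p \<in> {fst la, fst (snd la), snd (snd la)}. part_size p = d \<and> part_length p \<le> n)"

definition coord :: "nat \<Rightarrow> point \<Rightarrow> nat" where
  "coord k x = (if k = 1 then fst x else if k = 2 then fst (snd x) else snd (snd x))"

definition slices :: "nat \<Rightarrow> point set \<Rightarrow> point set set" where
  "slices k H = {{x \<in> H. coord k x = i} | i. \<exists>x \<in> H. coord k x = i}"

definition slice_partition :: "nat \<Rightarrow> point set \<Rightarrow> nat list" where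
  "slice_partition k H = rev (sorted_list_of_multiset (image_mset card (mset_set (slices k H))))"

definition design_type :: "point set \<Rightarrow> nat list \<times> nat list \<times> nat list" where
  "design_type H = (part_transpose (slice_partition 1 H),
                    part_transpose (slice_partition 2 H),
                    part_transpose (slice_partition 3 H))"

definition proper_coloring :: "point set \<Rightarrow> nat \<Rightarrow> (point \<Rightarrow> nat) \<Rightarrow> bool" where
  "proper_coloring H c \<sigma> \<longleftrightarrow> (\<forall>x \<in> H. \<sigma> x \<in> {1..c}) \<and>
     (\<forall>k \<in> {1,2,3}. \<forall>e \<in> slices k H. inj_on \<sigma> e)"

definition chromatic_index :: "point set \<Rightarrow> nat" where
  "chromatic_index H = (LEAST c. \<exists>\<sigma>. proper_coloring H c \<sigma>)"

definition is_decomp :: "nat \<Rightarrow> tensor3 \<Rightarrow> nat \<Rightarrow> (nat \<Rightarrow> cvec) \<Rightarrow> (nat \<Rightarrow> cvec) \<Rightarrow> (nat \<Rightarrow> cvec) \<Rightarrow> bool" where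
  "is_decomp n w r u v x \<longleftrightarrow>
     (\<forall>i<n. \<forall>j<n. \<forall>k<n. w i j k = (\<Sum>l<r. u l i * v l j * x l k))"

definition tensor_rank :: "nat \<Rightarrow> tensor3 \<Rightarrow> nat" where
  "tensor_rank n w = (LEAST r. \<exists>u v x. is_decomp n w r u v x)"

definition border_rank :: "nat \<Rightarrow> tensor3 \<Rightarrow> nat" where
  "border_rank n w = (LEAST r. \<exists>T :: nat \<Rightarrow> tensor3.
      (\<forall>m. tensor_rank n (T m) \<le> r) \<and>
      (\<forall>i<n. \<forall>j<n. \<forall>k<n. (\<lambda>m. T m i j k) \<longlonglongrightarrow> w i j k))"

text \<open>the b-th element (0-based) of e in the order given by rk\<close>
definition nth_in_order :: "(point \<Rightarrow> nat) \<Rightarrow> point set \<Rightarrow> nat \<Rightarrow> point" where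
  "nth_in_order rk e b = inv_into e rk (sorted_list_of_set (rk ` e) ! b)"

definition det_restr :: "(point \<Rightarrow> nat) \<Rightarrow> (point \<Rightarrow> cvec) \<Rightarrow> point set \<Rightarrow> complex" where
  "det_restr rk J e = det (mat (card e) (card e) (\<lambda>(a, b). J (nth_in_order rk e b) a))"

definition eval_design :: "point set \<Rightarrow> (point \<Rightarrow> nat) \<Rightarrow>
    (point \<Rightarrow> cvec) \<Rightarrow> (point \<Rightarrow> cvec) \<Rightarrow> (point \<Rightarrow> cvec) \<Rightarrow> complex" where
  "eval_design H rk J1 J2 J3 =
     (\<Prod>e\<in>slices 1 H. det_restr rk J1 e) * (\<Prod>e\<in>slices 2 H. det_restr rk J2 e) *
     (\<Prod>e\<in>slices 3 H. det_restr rk J3 e)"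

definition fH_decomp :: "point set \<Rightarrow> (point \<Rightarrow> nat) \<Rightarrow> nat \<Rightarrow>
    (nat \<Rightarrow> cvec) \<Rightarrow> (nat \<Rightarrow> cvec) \<Rightarrow> (nat \<Rightarrow> cvec) \<Rightarrow> complex" where
  "fH_decomp H rk r u v x =
     (\<Sum>I \<in> PiE H (\<lambda>_. {..<r}).
        eval_design H rk (\<lambda>s. u (I s)) (\<lambda>s. v (I s)) (\<lambda>s. x (I s)))"

text \<open>f_H(w): evaluate on some decomposition of w (the value is independent of the
decomposition, as stated in the paper).\<close>
definition fH :: "nat \<Rightarrow> point set \<Rightarrow> (point \<Rightarrow> nat) \<Rightarrow> tensor3 \<Rightarrow> complex" where
  "fH n H rk w = (let (r, u, v, x) = (SOME (r, u, v, x). is_decomp n w r u v x)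
                  in fH_decomp H rk r u v x)"

end

theory Submission
  imports Defs
begin

text \<open>Since every slice has at most \<open>n\<close> points (the type condition), each slice determinant,
and hence \<open>eval_design\<close>, is a multilinear form in the labelling vectors reading only their
first \<open>n\<close> coordinates. Summing over the index maps of a decomposition \<open>w = \<Sum>l<r. u\<^sub>l \<otimes> v\<^sub>l \<otimes> x\<^sub>l\<close>
therefore turns \<open>f\<^sub>H(w)\<close> into a polynomial in the entries of \<open>w\<close>. An index map with fewer
than \<open>\<chi>'(H)\<close> values repeats on some slice, producing a determinant with two equal columns,
so this polynomial vanishes on tensors of rank \<open>< \<chi>'(H)\<close>; by continuity it also vanishes on
their limits, i.e. on tensors of border rank \<open>< \<chi>'(H)\<close>.\<close>

definition multilinear_eval :: "nat \<Rightarrow> 'a set \<Rightarrow> (('a \<Rightarrow> nat) \<Rightarrow> complex) \<Rightarrow> ('a \<Rightarrow> cvec) \<Rightarrow> complex" where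
  "multilinear_eval n A c J = (\<Sum>a\<in>PiE A (\<lambda>_. {..<n}). c a * (\<Prod>s\<in>A. J s (a s)))"

definition multilinear_form_on :: "nat \<Rightarrow> 'a set \<Rightarrow> (('a \<Rightarrow> cvec) \<Rightarrow> complex) \<Rightarrow> bool" where
  "multilinear_form_on n A F \<longleftrightarrow> (\<exists>c. F = multilinear_eval n A c)"

lemma multilinear_form_onI:
  assumes A: "finite A" and C: "finite C" and a: "\<And>q s. q \<in> C \<Longrightarrow> s \<in> A \<Longrightarrow> a q s < n"
    and F: "\<And>J. F J = (\<Sum>q\<in>C. c q * (\<Prod>s\<in>A. J s (a q s)))"
  shows "multilinear_form_on n A F"
proof -
  let ?P = "PiE A (\<lambda>_. {..<n})"
  define g where "g q = restrict (a q) A" for q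
  define c' where "c' \<alpha> = (\<Sum>q\<in>{q\<in>C. g q = \<alpha>}. c q)" for \<alpha>
  have gC: "g ` C \<subseteq> ?P" using a unfolding g_def by auto
  have "F J = multilinear_eval n A c' J" for J
  proof -
    have "multilinear_eval n A c' J = (\<Sum>\<alpha>\<in>?P. \<Sum>q\<in>{q\<in>C. g q = \<alpha>}. c q * (\<Prod>s\<in>A. J s (g q s)))"
      unfolding multilinear_eval_def c'_def sum_distrib_right by (intro sum.cong) auto
    also have "\<dots> = (\<Sum>q\<in>C. c q * (\<Prod>s\<in>A. J s (g q s)))"
      by (rule sum.group[OF C _ gC]) (simp add: A finite_PiE)
    also have "\<dots> = F J"
      unfolding F g_def by (intro sum.cong refl arg_cong2[where f = "(*)"] prod.cong) auto
    finally show ?thesis by simp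
  qed
  thus ?thesis unfolding multilinear_form_on_def by blast
qed

lemma multilinear_form_on_empty: "multilinear_form_on n {} (\<lambda>_. 1)"
  unfolding multilinear_form_on_def multilinear_eval_def by (auto intro!: exI[of _ "\<lambda>_. 1"])

lemma multilinear_form_on_mult:
  assumes A: "finite A" and B: "finite B" and AB: "A \<inter> B = {}"
    and F: "multilinear_form_on n A F" and G: "multilinear_form_on n B G"
  shows "multilinear_form_on n (A \<union> B) (\<lambda>J. F J * G J)"
proof -
  obtain c d where F: "F = multilinear_eval n A c" and G: "G = multilinear_eval n B d"
    using F G unfolding multilinear_form_on_def by blast
  define merge where "merge \<alpha>\<beta> s = (if s \<in> A then fst \<alpha>\<beta> s else snd \<alpha>\<beta> s)" for \<alpha>\<beta> :: "('a \<Rightarrow> nat) \<times> ('a \<Rightarrow> nat)" and s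
  let ?C = "PiE A (\<lambda>_. {..<n}) \<times> PiE B (\<lambda>_. {..<n})"
  show ?thesis
  proof (rule multilinear_form_onI)
    show "finite ?C" using A B by (simp add: finite_PiE)
    show "merge q s < n" if "q \<in> ?C" "s \<in> A \<union> B" for q s
      using that unfolding merge_def by (auto simp: PiE_def Pi_def)
    fix J :: "'a \<Rightarrow> cvec"
    have split: "(\<Prod>s\<in>A. J s (\<alpha> s)) * (\<Prod>s\<in>B. J s (\<beta> s)) = (\<Prod>s\<in>A \<union> B. J s (merge (\<alpha>, \<beta>) s))"
      for \<alpha> \<beta>
      unfolding prod.union_disjoint[OF A B AB] merge_def using AB
      by (intro arg_cong2[where f = "(*)"] prod.cong) auto
    show "F J * G J = (\<Sum>q\<in>?C. (c (fst q) * d (snd q)) * (\<Prod>s\<in>A \<union> B. J s (merge q s)))"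
      unfolding F G multilinear_eval_def sum_product sum.cartesian_product
      by (intro sum.cong refl) (auto simp: split[symmetric] mult_ac)
  qed (use A B in simp)
qed

lemma multilinear_form_on_prod:
  assumes "finite E" "\<And>e. e \<in> E \<Longrightarrow> finite e" "pairwise disjnt E"
    and "\<And>e. e \<in> E \<Longrightarrow> multilinear_form_on n e (F e)"
  shows "multilinear_form_on n (\<Union>E) (\<lambda>J. \<Prod>e\<in>E. F e J)"
  using assms
proof (induction E rule: finite_induct)
  case empty
  show ?case using multilinear_form_on_empty by simp
next
  case (insert e E)
  have "e \<inter> \<Union>E = {}"
    using insert.prems(2) insert.hyps(2) by (fastforce simp: pairwise_def disjnt_def)
  moreover have "multilinear_form_on n (\<Union>E) (\<lambda>J. \<Prod>e\<in>E. F e J)"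
    using insert by (simp add: pairwise_insert)
  ultimately have "multilinear_form_on n (e \<union> \<Union>E) (\<lambda>J. F e J * (\<Prod>e\<in>E. F e J))"
    using insert by (intro multilinear_form_on_mult) auto
  thus ?case using insert.hyps by simp
qed

lemma finite_slices: "finite H \<Longrightarrow> finite (slices k H)"
proof -
  assume "finite H"
  moreover have "slices k H = (\<lambda>i. {x \<in> H. coord k x = i}) ` coord k ` H"
    unfolding slices_def by auto
  ultimately show ?thesis by simp
qed

lemma slice_subset: "e \<in> slices k H \<Longrightarrow> e \<subseteq> H"
  unfolding slices_def by auto

lemma Union_slices: "\<Union>(slices k H) = H"
  unfolding slices_def by auto

lemma pairwise_disjnt_slices: "pairwise disjnt (slices k H)"
  unfolding slices_def pairwise_def disjnt_def by auto

lemma bij_betw_nth_in_order: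
  assumes "finite e" "inj_on rk e"
  shows "bij_betw (nth_in_order rk e) {..<card e} e"
proof -
  let ?xs = "sorted_list_of_set (rk ` e)"
  have "length ?xs = card e" using assms by (simp add: card_image)
  hence "bij_betw ((!) ?xs) {..<card e} (rk ` e)"
    by (intro bij_betw_nth) (use assms in auto)
  moreover have "bij_betw (inv_into e rk) (rk ` e) e"
    using assms by (simp add: bij_betw_inv_into inj_on_imp_bij_betw)
  ultimately have "bij_betw (inv_into e rk \<circ> (!) ?xs) {..<card e} e"
    by (rule bij_betw_trans)
  thus ?thesis unfolding nth_in_order_def comp_def .
qed

definition pos_in_order :: "(point \<Rightarrow> nat) \<Rightarrow> point set \<Rightarrow> point \<Rightarrow> nat" where
  "pos_in_order rk e = inv_into {..<card e} (nth_in_order rk e)"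

lemma det_restr_eq_0_if_repeated:
  assumes "finite e" "inj_on rk e" "s \<in> e" "t \<in> e" "s \<noteq> t" "J s = J t"
  shows "det_restr rk J e = 0"
proof -
  let ?g = "nth_in_order rk e"
  have g: "bij_betw ?g {..<card e} e" using assms by (intro bij_betw_nth_in_order)
  have "s \<in> ?g ` {..<card e}" "t \<in> ?g ` {..<card e}"
    using assms(3,4) bij_betw_imp_surj_on[OF g] by auto
  then obtain i j where ij: "i < card e" "?g i = s" "j < card e" "?g j = t" by blast
  have "i \<noteq> j" using ij assms(5) by auto
  show ?thesis unfolding det_restr_def
    by (rule det_identical_columns[OF mat_carrier \<open>i \<noteq> j\<close> ij(1,3)]) (use ij assms(6) in auto)
qed

text \<open>Leibniz expansion of the transposed matrix: the point \<open>s\<close> of \<open>e\<close> contributes its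
coordinate \<open>p (pos_in_order rk e s)\<close>.\<close>
lemma det_restr_Leibniz:
  assumes "finite e" "inj_on rk e"
  shows "det_restr rk J e = (\<Sum>p | p permutes {..<card e}.
           signof p * (\<Prod>s\<in>e. J s (p (pos_in_order rk e s))))"
proof -
  let ?m = "card e" and ?g = "nth_in_order rk e"
  let ?A = "mat ?m ?m (\<lambda>(a, b). J (?g b) a)"
  have g: "bij_betw ?g {..<?m} e" using assms by (intro bij_betw_nth_in_order)
  have pos_g: "pos_in_order rk e (?g i) = i" if "i < ?m" for i
    unfolding pos_in_order_def using g that by (simp add: bij_betw_def inv_into_f_f)
  have "det_restr rk J e = det (transpose_mat ?A)"
    unfolding det_restr_def by (rule det_transpose[symmetric, OF mat_carrier])
  also have "\<dots> = (\<Sum>p | p permutes {0..<?m}. signof p * (\<Prod>i=0..<?m. transpose_mat ?A $$ (i, p i)))"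
    by (rule det_def') (simp add: transpose_carrier_mat)
  also have "\<dots> = (\<Sum>p | p permutes {..<?m}. signof p * (\<Prod>i<?m. J (?g i) (p (pos_in_order rk e (?g i)))))"
    by (intro sum.cong arg_cong2[where f = "(*)"] prod.cong)
       (auto simp: atLeast0LessThan permutes_in_image pos_g)
  also have "\<dots> = (\<Sum>p | p permutes {..<?m}. signof p * (\<Prod>s\<in>e. J s (p (pos_in_order rk e s))))"
    by (intro sum.cong refl arg_cong2[where f = "(*)"] prod.reindex_bij_betw[OF g])
  finally show ?thesis .
qed

lemma multilinear_form_on_det_restr:
  assumes e: "finite e" "inj_on rk e" and n: "card e \<le> n"
  shows "multilinear_form_on n e (\<lambda>J. det_restr rk J e)"
proof (rule multilinear_form_onI[OF e(1)])
  have "bij_betw (nth_in_order rk e) {..<card e} e" using e by (rule bij_betw_nth_in_order)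
  hence pos: "pos_in_order rk e s < card e" if "s \<in> e" for s
    unfolding pos_in_order_def using that by (metis bij_betw_def inv_into_into lessThan_iff)
  show "p (pos_in_order rk e s) < n" if "p \<in> {p. p permutes {..<card e}}" "s \<in> e" for p s
    using that pos n by (metis mem_Collect_eq lessThan_iff permutes_in_image order_less_le_trans)
qed (use det_restr_Leibniz[OF e] in \<open>auto simp: finite_permutations\<close>)

lemma multilinear_form_on_slices:
  assumes "finite H" "inj_on rk H" "\<And>e. e \<in> slices k H \<Longrightarrow> card e \<le> n"
  shows "multilinear_form_on n H (\<lambda>J. \<Prod>e\<in>slices k H. det_restr rk J e)"
proof -
  have "multilinear_form_on n (\<Union>(slices k H)) (\<lambda>J. \<Prod>e\<in>slices k H. det_restr rk J e)"
    using assms slice_subset[of _ k H] finite_slices pairwise_disjnt_slices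
    by (intro multilinear_form_on_prod multilinear_form_on_det_restr)
       (auto intro: finite_subset inj_on_subset)
  thus ?thesis by (simp add: Union_slices)
qed

lemma chromatic_index_le: "proper_coloring H c \<sigma> \<Longrightarrow> chromatic_index H \<le> c"
  unfolding chromatic_index_def by (metis Least_le)

lemma eval_design_eq_0_if_not_inj_on_slice:
  assumes "finite H" "inj_on rk H" "k \<in> {1, 2, 3}" "e \<in> slices k H" "\<not> inj_on I e"
  shows "eval_design H rk (\<lambda>s. u (I s)) (\<lambda>s. v (I s)) (\<lambda>s. x (I s)) = 0"
proof -
  obtain s t where st: "s \<in> e" "t \<in> e" "s \<noteq> t" "I s = I t"
    using assms(5) unfolding inj_on_def by blast
  have e: "finite e" "inj_on rk e"
    using slice_subset[OF assms(4)] assms(1,2) by (auto intro: finite_subset inj_on_subset)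
  have "det_restr rk (\<lambda>s. J (I s)) e = 0" for J
    using det_restr_eq_0_if_repeated[OF e st(1-3)] st(4) by simp
  hence "(\<Prod>e\<in>slices k H. det_restr rk (\<lambda>s. J (I s)) e) = 0" for J
    using finite_slices[OF assms(1)] assms(4) by (metis prod_zero)
  thus ?thesis using assms(3) unfolding eval_design_def by auto
qed

text \<open>A summand of \<open>fH_decomp\<close> survives only if the index map \<open>I\<close> is injective on every
slice, i.e. only if \<open>I\<close> is a proper colouring with \<open>r\<close> colours.\<close>
lemma fH_decomp_eq_0_if_lt_chromatic_index:
  assumes fin: "finite H" and inj: "inj_on rk H" and r: "r < chromatic_index H"
  shows "fH_decomp H rk r u v x = 0"
  unfolding fH_decomp_def
proof (intro sum.neutral ballI)
  fix I assume I: "I \<in> PiE H (\<lambda>_. {..<r})"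
  show "eval_design H rk (\<lambda>s. u (I s)) (\<lambda>s. v (I s)) (\<lambda>s. x (I s)) = 0"
  proof (cases "\<forall>k\<in>{1, 2, 3}. \<forall>e\<in>slices k H. inj_on I e")
    case True
    have "proper_coloring H r (\<lambda>s. Suc (I s))"
      unfolding proper_coloring_def using I True by (auto simp: PiE_def Pi_def inj_on_def Suc_le_eq)
    with r show ?thesis using chromatic_index_le by fastforce
  next
    case False
    with fin inj show ?thesis by (auto intro: eval_design_eq_0_if_not_inj_on_slice)
  qed
qed

lemma le_part_length_part_transpose:
  assumes "y \<in> set la" shows "y \<le> part_length (part_transpose la)"
proof -
  let ?M = "Max (set (0 # la))"
  have nonzero: "z \<noteq> 0" if z: "z \<in> set (part_transpose la)" for z
  proof -
    obtain j where "j \<in> set [1..<Suc ?M]" "z = length (filter (\<lambda>x. j \<le> x) la)"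
      using z unfolding part_transpose_def set_map by blast
    hence j: "1 \<le> j" "j \<le> ?M" "z = length (filter (\<lambda>x. j \<le> x) la)" by auto
    have "?M \<in> set (0 # la)" by (rule Max_in) auto
    with j have "?M \<in> set (filter (\<lambda>x. j \<le> x) la)" by auto
    with j(3) show ?thesis by (metis length_0_conv empty_iff list.set(1))
  qed
  have "part_length (part_transpose la) = ?M"
    unfolding part_length_def using nonzero by (simp add: filter_id_conv part_transpose_def)
  thus ?thesis using assms by simp
qed

lemma card_slice_le:
  assumes "finite H" "vdash_n n d (design_type H)" "k \<in> {1, 2, 3}" "e \<in> slices k H"
  shows "card e \<le> n"
proof -
  have "card e \<in> set (slice_partition k H)"
    unfolding slice_partition_def using finite_slices[OF assms(1)] assms(4) by simp
  hence "card e \<le> part_length (part_transpose (slice_partition k H))"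
    by (rule le_part_length_part_transpose)
  also have "\<dots> \<le> n"
    using assms(2,3) unfolding vdash_n_def design_type_def by auto
  finally show ?thesis .
qed

definition tensor_polynomial :: "nat \<Rightarrow> 'a set \<Rightarrow> (('a \<Rightarrow> nat) \<Rightarrow> complex) \<Rightarrow>
    (('a \<Rightarrow> nat) \<Rightarrow> complex) \<Rightarrow> (('a \<Rightarrow> nat) \<Rightarrow> complex) \<Rightarrow> tensor3 \<Rightarrow> complex" where
  "tensor_polynomial n A c1 c2 c3 w =
     (\<Sum>a1\<in>PiE A (\<lambda>_. {..<n}). \<Sum>a2\<in>PiE A (\<lambda>_. {..<n}). \<Sum>a3\<in>PiE A (\<lambda>_. {..<n}).
        c1 a1 * c2 a2 * c3 a3 * (\<Prod>s\<in>A. w (a1 s) (a2 s) (a3 s)))"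

lemma tendsto_tensor_polynomial:
  assumes "\<forall>i<n. \<forall>j<n. \<forall>k<n. (\<lambda>m. T m i j k) \<longlonglongrightarrow> w i j k"
  shows "(\<lambda>m. tensor_polynomial n A c1 c2 c3 (T m)) \<longlonglongrightarrow> tensor_polynomial n A c1 c2 c3 w"
  unfolding tensor_polynomial_def
proof (intro tendsto_sum tendsto_mult tendsto_const tendsto_prod)
  fix a1 a2 a3 s assume "a1 \<in> PiE A (\<lambda>_. {..<n})" "a2 \<in> PiE A (\<lambda>_. {..<n})"
    "a3 \<in> PiE A (\<lambda>_. {..<n})" "s \<in> A"
  hence "a1 s < n" "a2 s < n" "a3 s < n" by auto
  with assms show "(\<lambda>m. T m (a1 s) (a2 s) (a3 s)) \<longlonglongrightarrow> w (a1 s) (a2 s) (a3 s)" by blast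
qed

lemma sum_product3:
  fixes f :: "'a \<Rightarrow> 'd::comm_semiring_0"
  shows "sum f A * sum g B * sum h C = (\<Sum>a\<in>A. \<Sum>b\<in>B. \<Sum>c\<in>C. f a * g b * h c)"
proof -
  have "sum f A * sum g B * sum h C = sum f A * (sum g B * sum h C)"
    by (rule mult.assoc)
  also have "\<dots> = (\<Sum>a\<in>A. \<Sum>b\<in>B. f a * (\<Sum>c\<in>C. g b * h c))"
    by (simp only: sum_product)
  also have "\<dots> = (\<Sum>a\<in>A. \<Sum>b\<in>B. \<Sum>c\<in>C. f a * g b * h c)"
    by (simp only: sum_distrib_left mult.assoc)
  finally show ?thesis .
qed

lemma sum_multilinear_eval_decomp:
  assumes A: "finite A" and dec: "is_decomp n w r u v x"
  shows "(\<Sum>I\<in>PiE A (\<lambda>_. {..<r}). multilinear_eval n A c1 (\<lambda>s. u (I s)) *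
            multilinear_eval n A c2 (\<lambda>s. v (I s)) * multilinear_eval n A c3 (\<lambda>s. x (I s)))
         = tensor_polynomial n A c1 c2 c3 w"
proof -
  let ?P = "PiE A (\<lambda>_. {..<n})" and ?I = "PiE A (\<lambda>_. {..<r})"
  let ?m = "\<lambda>I a1 a2 a3. \<Prod>s\<in>A. u (I s) (a1 s) * v (I s) (a2 s) * x (I s) (a3 s)"
  have rank_one_sum: "(\<Sum>I\<in>?I. ?m I a1 a2 a3) = (\<Prod>s\<in>A. w (a1 s) (a2 s) (a3 s))"
    if "a1 \<in> ?P" "a2 \<in> ?P" "a3 \<in> ?P" for a1 a2 a3
  proof -
    have "(\<Sum>I\<in>?I. ?m I a1 a2 a3) = (\<Prod>s\<in>A. \<Sum>l<r. u l (a1 s) * v l (a2 s) * x l (a3 s))"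
      by (rule prod_sum_PiE[symmetric]) (use A in auto)
    also have "\<dots> = (\<Prod>s\<in>A. w (a1 s) (a2 s) (a3 s))"
    proof (rule prod.cong[OF refl])
      fix s assume "s \<in> A"
      hence "a1 s < n" "a2 s < n" "a3 s < n" using that by auto
      thus "(\<Sum>l<r. u l (a1 s) * v l (a2 s) * x l (a3 s)) = w (a1 s) (a2 s) (a3 s)"
        using dec unfolding is_decomp_def by simp
    qed
    finally show ?thesis .
  qed
  have "(\<Sum>I\<in>?I. multilinear_eval n A c1 (\<lambda>s. u (I s)) *
          multilinear_eval n A c2 (\<lambda>s. v (I s)) * multilinear_eval n A c3 (\<lambda>s. x (I s)))
      = (\<Sum>I\<in>?I. \<Sum>a1\<in>?P. \<Sum>a2\<in>?P. \<Sum>a3\<in>?P. c1 a1 * c2 a2 * c3 a3 * ?m I a1 a2 a3)"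
    unfolding multilinear_eval_def sum_product3
    by (intro sum.cong refl) (simp add: prod.distrib mult_ac)
  also have "\<dots> = (\<Sum>a1\<in>?P. \<Sum>a2\<in>?P. \<Sum>a3\<in>?P. \<Sum>I\<in>?I. c1 a1 * c2 a2 * c3 a3 * ?m I a1 a2 a3)"
    by (subst sum.swap, rule sum.cong[OF refl], subst sum.swap, rule sum.cong[OF refl], rule sum.swap)
  also have "\<dots> = tensor_polynomial n A c1 c2 c3 w"
    unfolding tensor_polynomial_def sum_distrib_left[symmetric]
    by (intro sum.cong refl) (simp add: rank_one_sum)
  finally show ?thesis .
qed

lemma exists_decomp: "\<exists>r u v x. is_decomp n w r u v x"
proof (intro exI)
  show "is_decomp n w (n * n) (\<lambda>l i. if i = l div n then 1 else 0)
      (\<lambda>l j. if j = l mod n then 1 else 0) (\<lambda>l k. w (l div n) (l mod n) k)"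
    unfolding is_decomp_def
  proof (intro allI impI)
    fix i j k assume ij: "i < n" "j < n"
    have summand: "(if i = l div n then 1 else 0) * (if j = l mod n then 1 else 0) *
        w (l div n) (l mod n) k = (if l = i * n + j then w i j k else 0)" for l
    proof (cases "l = i * n + j")
      case False
      hence "\<not> (i = l div n \<and> j = l mod n)" by (metis div_mult_mod_eq)
      thus ?thesis using False by auto
    qed (use ij(2) in simp)
    have "i * n + j < (i + 1) * n" using ij(2) by simp
    also have "\<dots> \<le> n * n" using ij(1) by (intro mult_right_mono) auto
    finally show "w i j k = (\<Sum>l<n * n. (if i = l div n then 1 else 0) *
        (if j = l mod n then 1 else 0) * w (l div n) (l mod n) k)"
      unfolding summand by simp
  qed
qed

lemma decomp_of_tensor_rank: "\<exists>u v x. is_decomp n w (tensor_rank n w) u v x"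
  unfolding tensor_rank_def using exists_decomp by (rule LeastI_ex)

lemma fH_eqI:
  assumes "\<And>r u v x. is_decomp n w r u v x \<Longrightarrow> fH_decomp H rk r u v x = z"
  shows "fH n H rk w = z"
proof -
  let ?d = "SOME (r, u, v, x). is_decomp n w r u v x"
  obtain r u v x where d: "?d = (r, u, v, x)" by (metis prod_cases4)
  have "(\<lambda>(r, u, v, x). is_decomp n w r u v x) ?d"
    by (rule someI_ex) (use exists_decomp in blast)
  hence "is_decomp n w r u v x" unfolding d by simp
  thus ?thesis unfolding fH_def d using assms by simp
qed

lemma vanishes_if_border_rank_less:
  fixes P :: "tensor3 \<Rightarrow> complex"
  assumes rank: "\<And>w'. tensor_rank n w' < c \<Longrightarrow> P w' = 0"
    and cont: "\<And>T w'. \<forall>i<n. \<forall>j<n. \<forall>k<n. (\<lambda>m. T m i j k) \<longlonglongrightarrow> w' i j k \<Longrightarrow>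
                 (\<lambda>m. P (T m)) \<longlonglongrightarrow> P w'"
    and "border_rank n w < c"
  shows "P w = 0"
proof -
  let ?approx = "\<lambda>r. \<exists>T :: nat \<Rightarrow> tensor3. (\<forall>m. tensor_rank n (T m) \<le> r) \<and>
      (\<forall>i<n. \<forall>j<n. \<forall>k<n. (\<lambda>m. T m i j k) \<longlonglongrightarrow> w i j k)"
  have "?approx (tensor_rank n w)" by (intro exI[of _ "\<lambda>_. w"]) auto
  hence "?approx (border_rank n w)" unfolding border_rank_def by (rule LeastI)
  then obtain T where T: "\<And>m. tensor_rank n (T m) \<le> border_rank n w"
    and lim: "\<forall>i<n. \<forall>j<n. \<forall>k<n. (\<lambda>m. T m i j k) \<longlonglongrightarrow> w i j k" by blast
  have "P (T m) = 0" for m using rank T assms(3) by (meson le_less_trans)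
  hence "(\<lambda>_. 0) \<longlonglongrightarrow> P w" using cont[OF lim] by simp
  from LIMSEQ_unique[OF this tendsto_const] show ?thesis by simp
qed

theorem proposition4p2:
  fixes H :: "point set" and rk :: "point \<Rightarrow> nat" and n d :: nat and w :: tensor3
  assumes "finite H"
    and "inj_on rk H"
    and "vdash_n n d (design_type H)"
    and "border_rank n w < chromatic_index H"
  shows "fH n H rk w = 0"
proof -
  have "multilinear_form_on n H (\<lambda>J. \<Prod>e\<in>slices k H. det_restr rk J e)" if "k \<in> {1, 2, 3}" for k
    using assms(1-3) card_slice_le that by (intro multilinear_form_on_slices) auto
  then obtain c1 c2 c3 where
    c: "\<And>J. (\<Prod>e\<in>slices 1 H. det_restr rk J e) = multilinear_eval n H c1 J"
       "\<And>J. (\<Prod>e\<in>slices 2 H. det_restr rk J e) = multilinear_eval n H c2 J"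
       "\<And>J. (\<Prod>e\<in>slices 3 H. det_restr rk J e) = multilinear_eval n H c3 J"
    unfolding multilinear_form_on_def by (metis insertI1 insertI2)
  let ?P = "tensor_polynomial n H c1 c2 c3"
  have decomp: "fH_decomp H rk r u v x = ?P w'" if "is_decomp n w' r u v x" for w' r u v x
    unfolding fH_decomp_def eval_design_def c using sum_multilinear_eval_decomp[OF assms(1) that] .
  have "?P w' = 0" if "tensor_rank n w' < chromatic_index H" for w'
  proof -
    obtain u v x where "is_decomp n w' (tensor_rank n w') u v x"
      using decomp_of_tensor_rank by blast
    with decomp fH_decomp_eq_0_if_lt_chromatic_index[OF assms(1,2) that] show ?thesis by metis
  qed
  hence "?P w = 0"
    using tendsto_tensor_polynomial assms(4) by (rule vanishes_if_border_rank_less)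
  thus ?thesis using decomp by (intro fH_eqI) auto
qed

end
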